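(* Let $X$ be a Tychonoff space with $|X|>1$ and let $I\neq J$ be vertices of $\mathbb{AG}(X)$. Then: (a) $d(I,J)=1$ iff $\mathcal{O}(I)\cap\mathcal{O}(J)=\emptyset$; (b) $d(I,J)=2$ iff $\mathcal{O}(I)\cap\mathcal{O}(J)\neq\emptyset$ and $\overline{\mathcal{O}(I)\cup\mathcal{O}(J)}\neq X$; (c) $d(I,J)=3$ iff $\mathcal{O}(I)\cap\mathcal{O}(J)\neq\emptyset$ and $\overline{\mathcal{O}(I)\cup\mathcal{O}(J)}=X$.
   Context: $C(X)$ denotes the ring of all real-valued continuous functions on $X$; $\mathrm{Coz}(f)=\{x: f(x)\neq 0\}$; for $S\subseteq C(X)$, $\mathcal{O}(S)=\bigcup_{f\in S}\mathrm{Coz}(f)$. $\mathbb{A}(X)$ is the set of nonzero ideals $I$ of $C(X)$ for which there is a nonzero ideal $J$ with $IJ=\{0\}$. The annihilating-ideal graph $\mathbb{AG}(X)$ has vertex set $\mathbb{A}(X)$, distinct vertices $I,J$ being adjacent iff $IJ=\{0\}$. $d(I,J)$ is the length of a shortest path between $I$ and $J$. *)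

theory Defs
  imports "HOL-Analysis.Analysis" "HOL-Library.Extended_Nat"
begin

definition tychonoff_space :: "'a topology \<Rightarrow> bool" where
  "tychonoff_space X \<longleftrightarrow> completely_regular_space X \<and> t1_space X"

text \<open>The ring C(X) of real-valued continuous functions on X. Functions are
  represented canonically by requiring them to vanish outside the topspace.\<close>
definition CX :: "'a topology \<Rightarrow> ('a \<Rightarrow> real) set" where
  "CX X = {f. continuous_map X euclideanreal f \<and> (\<forall>x. x \<notin> topspace X \<longrightarrow> f x = 0)}"

definition is_ideal :: "'a topology \<Rightarrow> ('a \<Rightarrow> real) set \<Rightarrow> bool" where
  "is_ideal X I \<longleftrightarrow> I \<subseteq> CX X \<and> (\<lambda>x. 0) \<in> I \<and>
     (\<forall>f\<in>I. \<forall>g\<in>I. (\<lambda>x. f x + g x) \<in> I) \<and>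
     (\<forall>f\<in>I. (\<lambda>x. - f x) \<in> I) \<and>
     (\<forall>f\<in>I. \<forall>h\<in>CX X. (\<lambda>x. h x * f x) \<in> I)"

definition ideal_prod :: "('a \<Rightarrow> real) set \<Rightarrow> ('a \<Rightarrow> real) set \<Rightarrow> ('a \<Rightarrow> real) set" where
  "ideal_prod I J = {(\<lambda>x. \<Sum>i<n. f i x * g i x) | (n::nat) f g. \<forall>i<n. f i \<in> I \<and> g i \<in> J}"

definition zero_ideal :: "('a \<Rightarrow> real) set" where
  "zero_ideal = {\<lambda>x. 0}"

definition AX :: "'a topology \<Rightarrow> ('a \<Rightarrow> real) set set" where
  "AX X = {I. is_ideal X I \<and> I \<noteq> zero_ideal \<and>
              (\<exists>J. is_ideal X J \<and> J \<noteq> zero_ideal \<and> ideal_prod I J = zero_ideal)}"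

definition AG_adj :: "'a topology \<Rightarrow> ('a \<Rightarrow> real) set \<Rightarrow> ('a \<Rightarrow> real) set \<Rightarrow> bool" where
  "AG_adj X I J \<longleftrightarrow> I \<in> AX X \<and> J \<in> AX X \<and> I \<noteq> J \<and> ideal_prod I J = zero_ideal"

definition AG_walk :: "'a topology \<Rightarrow> ('a \<Rightarrow> real) set \<Rightarrow> ('a \<Rightarrow> real) set \<Rightarrow> nat \<Rightarrow> bool" where
  "AG_walk X I J n \<longleftrightarrow> (\<exists>p :: nat \<Rightarrow> ('a \<Rightarrow> real) set.
      p 0 = I \<and> p n = J \<and> (\<forall>i\<le>n. p i \<in> AX X) \<and> (\<forall>i<n. AG_adj X (p i) (p (Suc i))))"

definition AG_dist :: "'a topology \<Rightarrow> ('a \<Rightarrow> real) set \<Rightarrow> ('a \<Rightarrow> real) set \<Rightarrow> enat" where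
  "AG_dist X I J = (INF n \<in> {n. AG_walk X I J n}. enat n)"

definition Coz :: "'a topology \<Rightarrow> ('a \<Rightarrow> real) \<Rightarrow> 'a set" where
  "Coz X f = {x \<in> topspace X. f x \<noteq> 0}"

definition OS :: "'a topology \<Rightarrow> ('a \<Rightarrow> real) set \<Rightarrow> 'a set" where
  "OS X S = (\<Union>f\<in>S. Coz X f)"

end

theory Submission
  imports Defs
begin

text \<open>Two ideals of \<open>C(X)\<close> annihilate each other exactly when their cozero sets are disjoint,
  so adjacency in \<open>AG(X)\<close> is disjointness of the open sets \<open>O(I)\<close>. A nonzero ideal is a vertex
  iff \<open>O(I)\<close> is not dense: a non-dense \<open>O(I)\<close> is annihilated by the nonzero ideal of functions
  vanishing on it (complete regularity provides one), while an ideal annihilating \<open>I\<close> has an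
  open cozero set missing the dense \<open>O(I)\<close>, hence is zero. Consequently \<open>I, J\<close> have a common
  neighbour iff \<open>O(I) \<union> O(J)\<close> is not dense, and otherwise \<open>I, Ann(O(I)), Ann(O(J)), J\<close>
  is a path of length 3, the two annihilators being disjoint because their open cozero sets
  miss a dense set.\<close>

lemma CX_zero: "(\<lambda>x. 0) \<in> CX X"
  unfolding CX_def by auto

lemma CX_add: "f \<in> CX X \<Longrightarrow> g \<in> CX X \<Longrightarrow> (\<lambda>x. f x + g x) \<in> CX X"
  unfolding CX_def by (auto intro: continuous_intros)

lemma CX_uminus: "f \<in> CX X \<Longrightarrow> (\<lambda>x. - f x) \<in> CX X"
  unfolding CX_def by (auto intro: continuous_intros)

lemma CX_mult: "f \<in> CX X \<Longrightarrow> g \<in> CX X \<Longrightarrow> (\<lambda>x. f x * g x) \<in> CX X"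
  unfolding CX_def by (auto intro: continuous_intros)

lemma openin_Coz: "f \<in> CX X \<Longrightarrow> openin X (Coz X f)"
  unfolding CX_def Coz_def
  using openin_continuous_map_preimage[of X euclideanreal f "- {0}"] by auto

lemma openin_OS: "is_ideal X I \<Longrightarrow> openin X (OS X I)"
  unfolding OS_def is_ideal_def using openin_Coz by (intro openin_Union) auto

lemma OS_nonempty:
  assumes "is_ideal X I" "I \<noteq> zero_ideal"
  shows "OS X I \<noteq> {}"
proof -
  obtain f where f: "f \<in> I" "f \<noteq> (\<lambda>x. 0)"
    using assms unfolding is_ideal_def zero_ideal_def by blast
  then obtain x where "f x \<noteq> 0" by auto
  moreover have "f \<in> CX X" using f(1) assms(1) unfolding is_ideal_def by auto
  ultimately have "x \<in> Coz X f" unfolding CX_def Coz_def by auto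
  then show ?thesis using f(1) unfolding OS_def by auto
qed

lemma openin_disjoint_dense_eq_empty:
  assumes "openin X U" "U \<inter> S = {}" "X closure_of S = topspace X"
  shows "U = {}"
  using openin_Int_closure_of_eq_empty[OF assms(1), of S] assms openin_subset by fastforce

lemma ideal_prod_eq_zero_iff:
  assumes "is_ideal X I" "is_ideal X J"
  shows "ideal_prod I J = zero_ideal \<longleftrightarrow> OS X I \<inter> OS X J = {}"
proof
  assume prod: "ideal_prod I J = zero_ideal"
  show "OS X I \<inter> OS X J = {}"
  proof (rule ccontr)
    assume "OS X I \<inter> OS X J \<noteq> {}"
    then obtain x f g where fg: "f \<in> I" "g \<in> J" "f x \<noteq> 0" "g x \<noteq> 0"
      unfolding OS_def Coz_def by auto
    have "(\<lambda>x. f x * g x) \<in> ideal_prod I J"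
      unfolding ideal_prod_def
      by (intro CollectI exI[of _ 1] exI[of _ "\<lambda>_. f"] exI[of _ "\<lambda>_. g"]) (simp add: fg)
    then have "(\<lambda>x. f x * g x) = (\<lambda>x. 0)" using prod unfolding zero_ideal_def by simp
    then show False using fg(3,4) by (metis mult_eq_0_iff)
  qed
next
  assume disj: "OS X I \<inter> OS X J = {}"
  have vanish: "f x * g x = 0" if "f \<in> I" "g \<in> J" for f g x
  proof (cases "x \<in> topspace X")
    case True
    then show ?thesis using disj that unfolding OS_def Coz_def by auto
  next
    case False
    then show ?thesis using that assms unfolding is_ideal_def CX_def by auto
  qed
  have "(\<lambda>x. 0) \<in> ideal_prod I J"
    unfolding ideal_prod_def by (intro CollectI exI[of _ 0]) simp
  moreover have "ideal_prod I J \<subseteq> zero_ideal"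
    unfolding ideal_prod_def zero_ideal_def using vanish by (auto simp: sum.neutral)
  ultimately show "ideal_prod I J = zero_ideal" unfolding zero_ideal_def by blast
qed

definition vanishing_ideal :: "'a topology \<Rightarrow> 'a set \<Rightarrow> ('a \<Rightarrow> real) set" where
  "vanishing_ideal X S = {f \<in> CX X. Coz X f \<inter> S = {}}"

lemma is_ideal_vanishing_ideal: "is_ideal X (vanishing_ideal X S)"
  unfolding is_ideal_def vanishing_ideal_def Coz_def disjoint_iff
  by (auto simp: CX_zero CX_add CX_uminus CX_mult)
lemma OS_vanishing_ideal_disjoint: "OS X (vanishing_ideal X S) \<inter> S = {}"
  unfolding OS_def vanishing_ideal_def by auto

lemma vanishing_ideal_nonzero:
  assumes "completely_regular_space X" "X closure_of S \<noteq> topspace X"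
  shows "vanishing_ideal X S \<noteq> zero_ideal"
proof -
  obtain x where x: "x \<in> topspace X - X closure_of S"
    using assms(2) closure_of_subset_topspace[of X S] by auto
  then have "closedin X (X closure_of S) \<and> x \<in> topspace X - X closure_of S" by simp
  then obtain f :: "'a \<Rightarrow> real" where f: "continuous_map X (top_of_set {0..1}) f" "f x = 0"
      "f ` (X closure_of S) \<subseteq> {1}"
    using assms(1)[unfolded completely_regular_space_def, rule_format] by blast
  define g where "g y = (if y \<in> topspace X then 1 - f y else 0)" for y
  have "continuous_map X euclideanreal (\<lambda>y. 1 - f y)"
    using f(1) by (auto intro: continuous_intros simp: continuous_map_in_subtopology)
  then have "continuous_map X euclideanreal g"
    by (rule continuous_map_eq) (simp add: g_def)
  then have "g \<in> CX X"
    unfolding CX_def g_def by simp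
  moreover have "Coz X g \<inter> S = {}"
    using f(3) closure_of_subset_Int[of X S] unfolding Coz_def g_def by auto
  ultimately have "g \<in> vanishing_ideal X S" unfolding vanishing_ideal_def by simp
  moreover have "g x \<noteq> 0" using x f(2) unfolding g_def by simp
  ultimately show ?thesis unfolding zero_ideal_def by force
qed

lemma AX_imp_ideal: "I \<in> AX X \<Longrightarrow> is_ideal X I \<and> I \<noteq> zero_ideal"
  unfolding AX_def by auto

lemma AX_imp_not_dense:
  assumes "I \<in> AX X"
  shows "X closure_of (OS X I) \<noteq> topspace X"
proof
  assume dense: "X closure_of OS X I = topspace X"
  obtain K where K: "is_ideal X K" "K \<noteq> zero_ideal" "ideal_prod I K = zero_ideal"
    using assms unfolding AX_def by auto
  have "OS X K \<inter> OS X I = {}"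
    using ideal_prod_eq_zero_iff[OF AX_imp_ideal[OF assms, THEN conjunct1] K(1)] K(3) by auto
  then have "OS X K = {}"
    using openin_disjoint_dense_eq_empty[OF openin_OS[OF K(1)] _ dense] by simp
  then show False using OS_nonempty[OF K(1,2)] by simp
qed

lemma vanishing_ideal_in_AX:
  assumes "completely_regular_space X" "X closure_of S \<noteq> topspace X"
    and "I \<in> AX X" "OS X I \<subseteq> S"
  shows "vanishing_ideal X S \<in> AX X"
proof -
  have I: "is_ideal X I" "I \<noteq> zero_ideal" using AX_imp_ideal[OF assms(3)] by auto
  have "OS X (vanishing_ideal X S) \<inter> OS X I = {}"
    using OS_vanishing_ideal_disjoint[of X S] assms(4) by auto
  then have "ideal_prod (vanishing_ideal X S) I = zero_ideal"
    using ideal_prod_eq_zero_iff[OF is_ideal_vanishing_ideal I(1)] by simp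
  then show ?thesis
    unfolding AX_def using is_ideal_vanishing_ideal vanishing_ideal_nonzero[OF assms(1,2)] I
    by blast
qed

lemma AG_adj_iff: "AG_adj X A B \<longleftrightarrow> A \<in> AX X \<and> B \<in> AX X \<and> OS X A \<inter> OS X B = {}"
proof -
  have "A \<noteq> B" if "A \<in> AX X" "OS X A \<inter> OS X B = {}"
    using OS_nonempty that AX_imp_ideal by fastforce
  then show ?thesis
    unfolding AG_adj_def using ideal_prod_eq_zero_iff AX_imp_ideal by blast
qed

lemma no_common_neighbour:
  assumes "X closure_of (OS X I \<union> OS X J) = topspace X"
  shows "\<not> (AG_adj X I K \<and> AG_adj X K J)"
proof
  assume adj: "AG_adj X I K \<and> AG_adj X K J"
  then have K: "is_ideal X K" "K \<noteq> zero_ideal" using AX_imp_ideal AG_adj_iff by blast+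
  have "OS X K \<inter> (OS X I \<union> OS X J) = {}" using adj unfolding AG_adj_iff by blast
  then have "OS X K = {}" using openin_disjoint_dense_eq_empty[OF openin_OS[OF K(1)] _ assms] by simp
  then show False using OS_nonempty[OF K] by simp
qed

lemma AG_walk_0_iff: "AG_walk X I J 0 \<longleftrightarrow> I = J \<and> I \<in> AX X"
  unfolding AG_walk_def by auto

lemma AG_walk_Suc_iff: "AG_walk X I J (Suc n) \<longleftrightarrow> (\<exists>K. AG_adj X I K \<and> AG_walk X K J n)"
proof
  assume "AG_walk X I J (Suc n)"
  then obtain p where p: "p 0 = I" "p (Suc n) = J" "\<forall>i\<le>Suc n. p i \<in> AX X"
      "\<forall>i<Suc n. AG_adj X (p i) (p (Suc i))"
    unfolding AG_walk_def by blast
  then have "AG_walk X (p 1) J n" unfolding AG_walk_def by (intro exI[of _ "p \<circ> Suc"]) auto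
  moreover have "AG_adj X I (p 1)" using p by auto
  ultimately show "\<exists>K. AG_adj X I K \<and> AG_walk X K J n" by blast
next
  assume "\<exists>K. AG_adj X I K \<and> AG_walk X K J n"
  then obtain K p where adj: "AG_adj X I K"
    and p: "p 0 = K" "p n = J" "\<forall>i\<le>n. p i \<in> AX X" "\<forall>i<n. AG_adj X (p i) (p (Suc i))"
    unfolding AG_walk_def by blast
  let ?q = "\<lambda>i. if i = 0 then I else p (i - 1)"
  have "\<forall>i\<le>Suc n. ?q i \<in> AX X" using p(3) adj unfolding AG_adj_def by (auto simp: le_diff_conv)
  moreover have "\<forall>i<Suc n. AG_adj X (?q i) (?q (Suc i))"
    using p(1,4) adj by (auto simp: less_Suc_eq_0_disj)
  ultimately show "AG_walk X I J (Suc n)" unfolding AG_walk_def using p(2) by (intro exI[of _ ?q]) auto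
qed

lemma AG_dist_eq_enat:
  assumes "AG_walk X I J n" "\<And>m. m < n \<Longrightarrow> \<not> AG_walk X I J m"
  shows "AG_dist X I J = enat n"
  unfolding AG_dist_def
proof (rule antisym)
  show "(INF n\<in>{n. AG_walk X I J n}. enat n) \<le> enat n"
    using assms(1) by (intro INF_lower2) auto
  show "enat n \<le> (INF n\<in>{n. AG_walk X I J n}. enat n)"
    using assms(2) by (intro INF_greatest) (auto simp: not_less[symmetric])
qed

lemma not_AG_walk_1:
  assumes "OS X I \<inter> OS X J \<noteq> {}"
  shows "\<not> AG_walk X I J 1"
  using assms by (simp add: AG_walk_Suc_iff AG_walk_0_iff AG_adj_iff)

lemma AG_dist_eq_1:
  assumes "I \<in> AX X" "J \<in> AX X" "I \<noteq> J" "OS X I \<inter> OS X J = {}"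
  shows "AG_dist X I J = 1"
proof -
  have "AG_walk X I J 1" using assms by (simp add: AG_walk_Suc_iff AG_walk_0_iff AG_adj_iff)
  moreover have "\<not> AG_walk X I J 0" using assms(3) by (simp add: AG_walk_0_iff)
  ultimately show ?thesis using AG_dist_eq_enat[of X I J 1] by (simp add: one_enat_def)
qed

lemma AG_dist_eq_2:
  assumes "completely_regular_space X" "I \<in> AX X" "J \<in> AX X" "I \<noteq> J"
    and "OS X I \<inter> OS X J \<noteq> {}" "X closure_of (OS X I \<union> OS X J) \<noteq> topspace X"
  shows "AG_dist X I J = 2"
proof -
  define K where "K = vanishing_ideal X (OS X I \<union> OS X J)"
  have "K \<in> AX X" unfolding K_def by (rule vanishing_ideal_in_AX[OF assms(1,6,2)]) auto
  moreover have "OS X K \<inter> (OS X I \<union> OS X J) = {}"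
    unfolding K_def by (rule OS_vanishing_ideal_disjoint)
  ultimately have "AG_walk X I J 2"
    using assms(2,3) by (auto simp: numeral_2_eq_2 AG_walk_Suc_iff AG_walk_0_iff AG_adj_iff)
  moreover have "\<not> AG_walk X I J m" if "m < 2" for m
    using that not_AG_walk_1[OF assms(5)] assms(4) by (auto simp: less_2_cases_iff AG_walk_0_iff)
  ultimately show ?thesis using AG_dist_eq_enat by (metis numeral_eq_enat)
qed

lemma AG_dist_eq_3:
  assumes "completely_regular_space X" "I \<in> AX X" "J \<in> AX X" "I \<noteq> J"
    and "OS X I \<inter> OS X J \<noteq> {}" and dense: "X closure_of (OS X I \<union> OS X J) = topspace X"
  shows "AG_dist X I J = 3"
proof -
  define K1 where "K1 = vanishing_ideal X (OS X I)"
  define K2 where "K2 = vanishing_ideal X (OS X J)"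
  have K1: "K1 \<in> AX X" "OS X I \<inter> OS X K1 = {}"
    unfolding K1_def using vanishing_ideal_in_AX[OF assms(1) AX_imp_not_dense assms(2)]
      OS_vanishing_ideal_disjoint[of X "OS X I"] assms(2) by auto
  have K2: "K2 \<in> AX X" "OS X K2 \<inter> OS X J = {}"
    unfolding K2_def using vanishing_ideal_in_AX[OF assms(1) AX_imp_not_dense assms(3)]
      OS_vanishing_ideal_disjoint[of X "OS X J"] assms(3) by auto
  have "openin X (OS X K1 \<inter> OS X K2)"
    using openin_OS AX_imp_ideal K1(1) K2(1) by blast
  then have "OS X K1 \<inter> OS X K2 = {}"
    using openin_disjoint_dense_eq_empty[OF _ _ dense] K1(2) K2(2) by blast
  then have "AG_walk X I J 3"
    using K1 K2 assms(2,3)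
    by (auto simp: numeral_3_eq_3 AG_walk_Suc_iff AG_walk_0_iff AG_adj_iff)
  moreover have "\<not> AG_walk X I J m" if "m < 3" for m
  proof -
    have "\<not> AG_walk X I J 2"
      using no_common_neighbour[OF dense] by (auto simp: numeral_2_eq_2 AG_walk_Suc_iff AG_walk_0_iff)
    moreover have "m = 0 \<or> m = 1 \<or> m = 2" using that by auto
    ultimately show ?thesis using not_AG_walk_1[OF assms(5)] assms(4) by (auto simp: AG_walk_0_iff)
  qed
  ultimately show ?thesis using AG_dist_eq_enat[of X I J 3] by (metis numeral_eq_enat)
qed

theorem mainTheorem9:
  fixes X :: "'a topology" and I J :: "('a \<Rightarrow> real) set"
  assumes "tychonoff_space X"
    and "\<exists>x\<in>topspace X. \<exists>y\<in>topspace X. x \<noteq> y"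
    and "I \<in> AX X" and "J \<in> AX X" and "I \<noteq> J"
  shows "(AG_dist X I J = 1 \<longleftrightarrow> OS X I \<inter> OS X J = {})
       \<and> (AG_dist X I J = 2 \<longleftrightarrow> OS X I \<inter> OS X J \<noteq> {} \<and> X closure_of (OS X I \<union> OS X J) \<noteq> topspace X)
       \<and> (AG_dist X I J = 3 \<longleftrightarrow> OS X I \<inter> OS X J \<noteq> {} \<and> X closure_of (OS X I \<union> OS X J) = topspace X)"
proof -
  have cr: "completely_regular_space X" using assms(1) unfolding tychonoff_space_def by simp
  consider (disjoint) "OS X I \<inter> OS X J = {}"
    | (not_dense) "OS X I \<inter> OS X J \<noteq> {}" "X closure_of (OS X I \<union> OS X J) \<noteq> topspace X"
    | (dense) "OS X I \<inter> OS X J \<noteq> {}" "X closure_of (OS X I \<union> OS X J) = topspace X"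
    by blast
  then show ?thesis
  proof cases
    case disjoint
    then show ?thesis using AG_dist_eq_1[OF assms(3-5)] by simp
  next
    case not_dense
    then show ?thesis using AG_dist_eq_2[OF cr assms(3-5)] by simp
  next
    case dense
    then show ?thesis using AG_dist_eq_3[OF cr assms(3-5)] by simp
  qed
qed

end
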